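(* Suppose $f:\mathbb{R}_{>0}\to\mathbb{R}_{\ge0}$ is twice differentiable at every $x>0$ with $f''(x)>0$ and $f'(1)=f(1)=0$. If there exist constants $L,U>0$ such that $L\le f''(x)\le U$ for all $x\in[\frac12,\frac32]$, then for every $\zeta\ge1$ and every $x\in(-\frac1{2\zeta},0)\cup(0,\frac1{2\zeta})$, $$\frac{x f'(1+\zeta x)}{f(1+x)}\le\frac{2U}{L}\zeta;$$ that is, $f$ satisfies the condition below with $F(\zeta)=\frac{2U}{L}\zeta$.
   Context: The condition referred to: $f$ is a convex continuous function $(0,\infty)\to[0,\infty)$ with $f(1)=0$, twice differentiable at every $x\ne1$ with $f''(x)\ge0$, $f'(x)<0$ on $(0,1)$ and $f'(x)>0$ on $(1,\infty)$, and there is $F:\mathbb{R}^+\to\mathbb{R}^+$ with $F(\zeta)\le\mathrm{poly}(\zeta)$ such that $\frac{xf'(1+\zeta x)}{f(1+x)}\le F(\zeta)$ for all $\zeta\ge1$ and $x\in(-\frac1{2\zeta},0)\cup(0,\frac1{2\zeta})$. *)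

theory Defs
  imports "HOL-Analysis.Analysis"
begin

end

theory Submission
  imports Defs
begin

text \<open>Taylor expansion around \<open>1\<close> therefore gives \<open>f (1 + x) \<ge> L x\<^sup>2 / 2\<close>
  and the mean value theorem for \<open>f'\<close> gives \<open>x f' (1 + \<zeta> x) \<le> U \<zeta> x\<^sup>2\<close>; the constraint
  \<open>\<bar>x\<bar> < 1 / (2 \<zeta>)\<close> keeps all points involved inside \<open>[1/2, 3/2]\<close>.\<close>

lemma Taylor_closed_segment:
  fixes f :: "real \<Rightarrow> real" and diff :: "nat \<Rightarrow> real \<Rightarrow> real"
  assumes "n > 0" "diff 0 = f"
    and derivs: "\<And>m t. m < n \<Longrightarrow> t \<in> closed_segment c x \<Longrightarrow>
      (diff m has_real_derivative diff (Suc m) t) (at t)"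
  obtains t where "t \<in> closed_segment c x"
    "f x = (\<Sum>m<n. diff m c / fact m * (x - c) ^ m) + diff n t / fact n * (x - c) ^ n"
proof (cases "x = c")
  case True
  have "(\<Sum>m<n. diff m c / fact m * (x - c) ^ m) = diff 0 c"
    using Maclaurin_zero[of "x - c" n "\<lambda>m _. diff m c"] True \<open>n > 0\<close> by simp
  with True assms(1,2) show ?thesis
    by (intro that[of c]) auto
next
  case False
  have "\<forall>m t. m < n \<and> min c x \<le> t \<and> t \<le> max c x \<longrightarrow>
      (diff m has_real_derivative diff (Suc m) t) (at t)"
    by (intro strip derivs) (auto simp: closed_segment_eq_real_ivl)
  from Taylor[OF assms(1,2) this _ _ _ _ False]
  obtain t where "if x < c then x < t \<and> t < c else c < t \<and> t < x"
    "f x = (\<Sum>m<n. diff m c / fact m * (x - c) ^ m) + diff n t / fact n * (x - c) ^ n"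
    by auto
  then show ?thesis
    by (intro that[of t]) (auto simp: closed_segment_eq_real_ivl split: if_splits)
qed

lemma mult_deriv_le_of_second_deriv_le:
  fixes f' f'' :: "real \<Rightarrow> real"
  assumes "\<And>t. t \<in> closed_segment a (a + h) \<Longrightarrow> (f' has_real_derivative f'' t) (at t)"
    and "\<And>t. t \<in> closed_segment a (a + h) \<Longrightarrow> f'' t \<le> U"
    and "f' a = 0"
  shows "h * f' (a + h) \<le> U * h\<^sup>2"
proof -
  obtain t where t: "t \<in> closed_segment a (a + h)" "f' (a + h) = f' a + f'' t * h"
    using Taylor_closed_segment[of 1 "\<lambda>m. if m = 0 then f' else f''" f' a "a + h"] assms(1)
    by auto
  have "h * f' (a + h) = f'' t * h\<^sup>2"
    using t(2) \<open>f' a = 0\<close> by (simp add: power2_eq_square)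
  also have "\<dots> \<le> U * h\<^sup>2"
    using assms(2)[OF t(1)] by (simp add: mult_right_mono)
  finally show ?thesis .
qed

lemma quadratic_lower_bound_of_second_deriv_ge:
  fixes f f' f'' :: "real \<Rightarrow> real"
  assumes "\<And>t. t \<in> closed_segment a (a + h) \<Longrightarrow> (f has_real_derivative f' t) (at t)"
    and "\<And>t. t \<in> closed_segment a (a + h) \<Longrightarrow> (f' has_real_derivative f'' t) (at t)"
    and "\<And>t. t \<in> closed_segment a (a + h) \<Longrightarrow> L \<le> f'' t"
    and "f a = 0" "f' a = 0"
  shows "L * h\<^sup>2 / 2 \<le> f (a + h)"
proof -
  let ?diff = "\<lambda>m. if m = 0 then f else if m = 1 then f' else f''"
  have "(?diff m has_real_derivative ?diff (Suc m) t) (at t)"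
    if "m < 2" "t \<in> closed_segment a (a + h)" for m t
    using that assms(1,2) by (auto simp: less_2_cases_iff)
  then obtain t where t: "t \<in> closed_segment a (a + h)"
    "f (a + h) = f a + f' a * h + f'' t / 2 * h\<^sup>2"
    using Taylor_closed_segment[of 2 ?diff f a "a + h"] by (auto simp: numeral_2_eq_2)
  then show ?thesis
    using assms(3)[OF t(1)] \<open>f a = 0\<close> \<open>f' a = 0\<close> by (simp add: mult_right_mono)
qed

lemma closed_segment_around_one_subset:
  fixes h :: real
  assumes "\<bar>h\<bar> \<le> 1/2"
  shows "closed_segment 1 (1 + h) \<subseteq> {1/2..3/2}"
  using assms by (auto simp: closed_segment_eq_real_ivl)

theorem lemma6p1:
  fixes f f' f'' :: "real \<Rightarrow> real" and L U :: real
  assumes nonneg: "\<And>x. x > 0 \<Longrightarrow> f x \<ge> 0"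
    and d1: "\<And>x. x > 0 \<Longrightarrow> (f has_real_derivative f' x) (at x)"
    and d2: "\<And>x. x > 0 \<Longrightarrow> (f' has_real_derivative f'' x) (at x)"
    and pos2: "\<And>x. x > 0 \<Longrightarrow> f'' x > 0"
    and f1: "f 1 = 0" and f'1: "f' 1 = 0"
    and LU: "L > 0" "U > 0"
    and bounds: "\<And>x. x \<in> {1/2..3/2} \<Longrightarrow> L \<le> f'' x \<and> f'' x \<le> U"
  shows "\<forall>\<zeta>::real. \<zeta> \<ge> 1 \<longrightarrow>
           (\<forall>x. x \<in> {-1/(2*\<zeta>)<..<0} \<union> {0<..<1/(2*\<zeta>)} \<longrightarrow>
              x * f' (1 + \<zeta> * x) / f (1 + x) \<le> (2 * U / L) * \<zeta>)"
proof (intro allI impI)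
  fix \<zeta> x :: real
  assume \<zeta>: "\<zeta> \<ge> 1" and x: "x \<in> {-1/(2*\<zeta>)<..<0} \<union> {0<..<1/(2*\<zeta>)}"
  have "\<bar>\<zeta> * x\<bar> < 1/2"
    using x \<zeta> by (auto simp: abs_mult field_simps)
  moreover have "\<bar>x\<bar> \<le> \<bar>\<zeta> * x\<bar>"
    using \<zeta> by (simp add: abs_mult mult_le_cancel_right1)
  ultimately have window_\<zeta>x: "closed_segment 1 (1 + \<zeta> * x) \<subseteq> {1/2..3/2}"
    and window_x: "closed_segment 1 (1 + x) \<subseteq> {1/2..3/2}"
    by (auto intro!: closed_segment_around_one_subset)
  have "\<zeta> * x * f' (1 + \<zeta> * x) \<le> U * (\<zeta> * x)\<^sup>2"
    using window_\<zeta>x bounds f'1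
    by (intro mult_deriv_le_of_second_deriv_le[where f' = f']) (auto intro!: d2)
  then have num: "x * f' (1 + \<zeta> * x) \<le> U * \<zeta> * x\<^sup>2"
    using \<zeta> by (simp add: power2_eq_square mult_ac)
  have den: "L * x\<^sup>2 / 2 \<le> f (1 + x)"
    using window_x bounds f1 f'1
    by (intro quadratic_lower_bound_of_second_deriv_ge[where f' = f' and f'' = f''])
      (auto intro!: d1 d2)
  have "L * x\<^sup>2 / 2 > 0"
    using x LU by auto
  then have "x * f' (1 + \<zeta> * x) / f (1 + x) \<le> U * \<zeta> * x\<^sup>2 / (L * x\<^sup>2 / 2)"
    using num den LU \<zeta> by (intro frac_le) auto
  also have "\<dots> = (2 * U / L) * \<zeta>"
    using x LU by (auto simp: field_simps)
  finally show "x * f' (1 + \<zeta> * x) / f (1 + x) \<le> (2 * U / L) * \<zeta>" .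
qed

end
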